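(* Let $q\in[0,1)$. A $\mathbb C^{n\times m}$-valued function $T$ analytic at the origin is $q$-rational if and only if $T$ is the $q$-Borel transform of a $\mathbb C^{n\times m}$-valued rational function $F$ analytic at the origin, i.e. $T(z)=\sum_{k=0}^\infty\frac{z^k}{[k]_q!}F_k$ where $F(z)=\sum_{k=0}^\infty z^kF_k$.
   Context: $[0]_q=1$, $[k]_q=1+q+\cdots+q^{k-1}$ ($k\ge1$), $[k]_q!=\prod_{j=1}^k[j]_q$, $[0]_q!=1$. A $\mathbb C^{n\times m}$-valued function $T$ analytic at the origin is called $q$-rational if there exist $N\in\mathbb N_0$ and $(C,A,B)\in\mathbb C^{n\times N}\times\mathbb C^{N\times N}\times\mathbb C^{N\times m}$ such that $T(z)=C\prod_{j=0}^\infty(I_N-(1-q)zq^jA)^{-1}B$ in a neighbourhood of the origin (convention $q^0=1$). *)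

theory Defs
  imports "HOL-Analysis.Analysis" "HOL-Computational_Algebra.Polynomial_FPS"
    "Jordan_Normal_Form.Gauss_Jordan_Elimination"
begin

definition qint :: "real \<Rightarrow> nat \<Rightarrow> real" where
  "qint q k = (if k = 0 then 1 else (\<Sum>j<k. q ^ j))"

definition qfact :: "real \<Rightarrow> nat \<Rightarrow> real" where
  "qfact q k = (\<Prod>j = 1..k. qint q j)"

definition minv :: "complex mat \<Rightarrow> complex mat" where
  "minv M = the (mat_inverse M)"

fun qpartial :: "real \<Rightarrow> complex mat \<Rightarrow> complex \<Rightarrow> nat \<Rightarrow> complex mat" where
  "qpartial q A z 0 = 1\<^sub>m (dim_row A)"
| "qpartial q A z (Suc J) =
     qpartial q A z J * minv (1\<^sub>m (dim_row A) - ((complex_of_real (1 - q)) * z * (complex_of_real q) ^ J) \<cdot>\<^sub>m A)"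

text \<open>q-rationality of a C^{n x m}-valued function: in a neighbourhood of 0,
  T(z) = C (prod_{j>=0} (I_N - (1-q) z q^j A)^{-1}) B, the infinite product
  being the (entrywise) limit of the partial products.\<close>
definition q_rational :: "real \<Rightarrow> nat \<Rightarrow> nat \<Rightarrow> (complex \<Rightarrow> complex mat) \<Rightarrow> bool" where
  "q_rational q n m T \<longleftrightarrow>
     (\<exists>N C A B. C \<in> carrier_mat n N \<and> A \<in> carrier_mat N N \<and> B \<in> carrier_mat N m \<and>
       (\<exists>r>0. \<forall>z. cmod z < r \<longrightarrow>
          (\<forall>j. invertible_mat (1\<^sub>m N - ((complex_of_real (1 - q)) * z * (complex_of_real q) ^ j) \<cdot>\<^sub>m A)) \<and>
          (\<exists>P. P \<in> carrier_mat N N \<and>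
               (\<forall>i<N. \<forall>k<N. (\<lambda>J. qpartial q A z J $$ (i, k)) \<longlonglongrightarrow> P $$ (i, k)) \<and>
               T z = C * P * B)))"

definition analytic_at0_mat :: "nat \<Rightarrow> nat \<Rightarrow> (complex \<Rightarrow> complex mat) \<Rightarrow> bool" where
  "analytic_at0_mat n m T \<longleftrightarrow> (\<forall>z. T z \<in> carrier_mat n m) \<and>
     (\<forall>i<n. \<forall>j<m. (\<lambda>z. T z $$ (i, j)) analytic_on {0})"

text \<open>Taylor coefficient F_k of the rational matrix function F with entries
  p_ij / q_ij (q_ij(0) \<noteq> 0), i.e. F(z) = sum_k z^k F_k near 0.\<close>
definition rat_coeff :: "nat \<Rightarrow> nat \<Rightarrow> (nat \<Rightarrow> nat \<Rightarrow> complex poly) \<Rightarrow> (nat \<Rightarrow> nat \<Rightarrow> complex poly)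
    \<Rightarrow> nat \<Rightarrow> complex mat" where
  "rat_coeff n m p d k = mat n m (\<lambda>(i, j). fps_nth (fps_of_poly (p i j) / fps_of_poly (d i j)) k)"

definition q_Borel_of :: "real \<Rightarrow> nat \<Rightarrow> nat \<Rightarrow> (complex \<Rightarrow> complex mat)
    \<Rightarrow> (nat \<Rightarrow> nat \<Rightarrow> complex poly) \<Rightarrow> (nat \<Rightarrow> nat \<Rightarrow> complex poly) \<Rightarrow> bool" where
  "q_Borel_of q n m T p d \<longleftrightarrow>
     (\<exists>r>0. \<forall>z. cmod z < r \<longrightarrow> (\<forall>i<n. \<forall>j<m.
        (\<lambda>k. z ^ k / complex_of_real (qfact q k) * rat_coeff n m p d k $$ (i, j)) sums (T z $$ (i, j))))"

end

theory Submission
  imports Defs "Jordan_Normal_Form.Determinant"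
begin

text \<open>Write \<open>E(z) = \<Sum>\<^sub>k z\<^sup>k A\<^sup>k / [k]\<^sub>q!\<close>. Since \<open>(1 - q) [k+1]\<^sub>q = 1 - q\<^sup>k\<^sup>+\<^sup>1\<close>, this series satisfies
  \<open>(I - (1 - q) z A) E(z) = E(q z)\<close>; telescoping gives
  \<open>E(z) = (\<Prod>\<^sub>j\<^sub><\<^sub>J (I - (1 - q) z q\<^sup>j A)\<^sup>-\<^sup>1) E(q\<^sup>J z)\<close>, and \<open>E(q\<^sup>J z) \<rightarrow> I\<close>. Hence the infinite
  product of a \<open>q\<close>-rational function equals \<open>E(z)\<close>, and \<open>T(z) = C E(z) B\<close> is exactly the \<open>q\<close>-Borel
  transform of \<open>F(z) = C (I - z A)\<^sup>-\<^sup>1 B = \<Sum>\<^sub>k z\<^sup>k C A\<^sup>k B\<close>. It remains to see that the sequences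
  \<open>C A\<^sup>k B\<close> are exactly the Taylor coefficients of rational matrix functions regular at \<open>0\<close>: one
  direction is Cramer's rule for \<open>(I - z A)\<^sup>-\<^sup>1\<close>, the other realizes the linear recurrence given
  by a common denominator with a block companion matrix.\<close>

lemma index_mult_mat_sum:
  assumes "A \<in> carrier_mat a b" "B \<in> carrier_mat b c" "i < a" "j < c"
  shows "(A * B) $$ (i,j) = (\<Sum>k<b. A $$ (i,k) * B $$ (k,j))"
  using assms by (auto simp: scalar_prod_def atLeast0LessThan intro!: sum.cong)

lemma pow_mat_Suc_left:
  assumes A: "A \<in> carrier_mat N N"
  shows "A ^\<^sub>m Suc k = A * A ^\<^sub>m k"
proof (induction k)
  case 0 then show ?case using A by simp
next
  case (Suc k)
  have "A ^\<^sub>m Suc (Suc k) = (A * A ^\<^sub>m k) * A" using Suc by simp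
  also have "\<dots> = A * A ^\<^sub>m Suc k" using A by (simp add: assoc_mult_mat[of _ N N _ N _ N])
  finally show ?case .
qed

lemma adj_mat_eq_det_smult_right_inverse:
  fixes M G :: "'a :: comm_ring_1 mat"
  assumes M: "M \<in> carrier_mat N N" and G: "G \<in> carrier_mat N N" and MG: "M * G = 1\<^sub>m N"
  shows "adj_mat M = Determinant.det M \<cdot>\<^sub>m G"
proof -
  have adj: "adj_mat M \<in> carrier_mat N N" by (rule adj_mat(1)[OF M])
  have "adj_mat M = (adj_mat M * M) * G"
    using adj MG by (simp add: assoc_mult_mat[OF adj M G])
  also have "\<dots> = Determinant.det M \<cdot>\<^sub>m G"
    using G by (simp add: adj_mat(3)[OF M] mult_smult_assoc_mat[OF one_carrier_mat G])
  finally show ?thesis .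
qed

lemma adj_mat_one: "adj_mat (1\<^sub>m N :: 'a :: comm_ring_1 mat) = 1\<^sub>m N"
proof -
  have "adj_mat (1\<^sub>m N :: 'a mat) = 1 \<cdot>\<^sub>m 1\<^sub>m N"
    using adj_mat_eq_det_smult_right_inverse[of "1\<^sub>m N" N "1\<^sub>m N"] by simp
  also have "\<dots> = 1\<^sub>m N" by (rule eq_matI) auto
  finally show ?thesis .
qed

lemma (in comm_ring_hom) hom_adj_mat:
  assumes A: "A \<in> carrier_mat N N"
  shows "adj_mat (map_mat hom A) = map_mat hom (adj_mat A)"
proof (rule eq_matI)
  fix i j assume "i < dim_row (map_mat hom (adj_mat A))" "j < dim_col (map_mat hom (adj_mat A))"
  then have ij: "i < N" "j < N" using A by (auto simp: adj_mat_def)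
  have "mat_delete (map_mat hom A) j i = map_mat hom (mat_delete A j i)"
    by (rule eq_matI) (use A ij in \<open>auto simp: mat_delete_def\<close>)
  then show "adj_mat (map_mat hom A) $$ (i, j) = map_mat hom (adj_mat A) $$ (i, j)"
    using A ij by (simp add: adj_mat_def cofactor_def hom_distribs)
qed (use A in \<open>auto simp: adj_mat_def\<close>)

lemma minv_correct:
  assumes M: "M \<in> carrier_mat N N" and d: "Determinant.det M \<noteq> 0"
  shows "minv M \<in> carrier_mat N N" "minv M * M = 1\<^sub>m N" "invertible_mat M"
proof -
  have "M \<in> Units (ring_mat TYPE(complex) N ())" by (rule det_non_zero_imp_unit[OF M d])
  then obtain B where B: "mat_inverse M = Some B"
    using mat_inverse(1)[OF M, where b="()"] by (cases "mat_inverse M") auto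
  from mat_inverse(2)[OF M B] have "M * B = 1\<^sub>m N" "B * M = 1\<^sub>m N" "B \<in> carrier_mat N N" by auto
  then show "minv M \<in> carrier_mat N N" "minv M * M = 1\<^sub>m N" "invertible_mat M"
    using M unfolding minv_def B invertible_mat_def inverts_mat_def by auto
qed

lemma tendsto_det:
  fixes M :: "'x \<Rightarrow> 'a :: real_normed_field mat"
  assumes M: "\<And>x. M x \<in> carrier_mat N N" and L: "L \<in> carrier_mat N N"
    and lim: "\<And>i k. i < N \<Longrightarrow> k < N \<Longrightarrow> ((\<lambda>x. M x $$ (i,k)) \<longlongrightarrow> L $$ (i,k)) F"
  shows "((\<lambda>x. Determinant.det (M x)) \<longlongrightarrow> Determinant.det L) F"
proof -
  have "((\<lambda>x. \<Sum>p\<in>{p. p permutes {0..<N}}. signof p * (\<Prod>i = 0..<N. M x $$ (i, p i)))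
        \<longlongrightarrow> (\<Sum>p\<in>{p. p permutes {0..<N}}. signof p * (\<Prod>i = 0..<N. L $$ (i, p i)))) F"
  proof (intro tendsto_intros)
    fix p i assume "p \<in> {p. p permutes {0..<N}}" "i \<in> {0..<N}"
    then show "((\<lambda>x. M x $$ (i, p i)) \<longlongrightarrow> L $$ (i, p i)) F"
      using permutes_in_image[of p "{0..<N}" i] by (intro lim) auto
  qed
  then show ?thesis unfolding det_def'[OF M] det_def'[OF L] .
qed

lemma tendsto_adj_mat:
  fixes M :: "'x \<Rightarrow> 'a :: real_normed_field mat"
  assumes M: "\<And>x. M x \<in> carrier_mat N N" and L: "L \<in> carrier_mat N N"
    and lim: "\<And>i k. i < N \<Longrightarrow> k < N \<Longrightarrow> ((\<lambda>x. M x $$ (i,k)) \<longlongrightarrow> L $$ (i,k)) F"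
    and i: "i < N" and k: "k < N"
  shows "((\<lambda>x. adj_mat (M x) $$ (i,k)) \<longlongrightarrow> adj_mat L $$ (i,k)) F"
proof -
  have adj: "adj_mat X $$ (i,k) = (-1)^(k+i) * Determinant.det (mat_delete X k i)"
    if "X \<in> carrier_mat N N" for X
    using that i k by (simp add: adj_mat_def cofactor_def)
  have delete: "mat_delete X k i $$ (a,b) = X $$ (if a < k then a else Suc a, if b < i then b else Suc b)"
    if "X \<in> carrier_mat N N" "a < N - 1" "b < N - 1" for X a b
    using that by (simp add: mat_delete_def)
  have "((\<lambda>x. Determinant.det (mat_delete (M x) k i)) \<longlongrightarrow> Determinant.det (mat_delete L k i)) F"
    by (rule tendsto_det[OF mat_delete_carrier[OF M] mat_delete_carrier[OF L]])
      (auto simp: delete M L intro!: lim)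
  then show ?thesis unfolding adj[OF M] adj[OF L] by (intro tendsto_mult tendsto_const)
qed

text \<open>Eventually \<open>P J = E * adj (G J) / det (G J)\<close>, and this tends to \<open>E\<close>.\<close>
lemma tendsto_of_mult_tendsto_one:
  fixes P G :: "nat \<Rightarrow> 'a :: real_normed_field mat"
  assumes P: "\<And>J. P J \<in> carrier_mat N N" and G: "\<And>J. G J \<in> carrier_mat N N"
    and E: "E \<in> carrier_mat N N" and PG: "\<And>J. P J * G J = E"
    and G_lim: "\<And>a b. a < N \<Longrightarrow> b < N \<Longrightarrow> (\<lambda>J. G J $$ (a,b)) \<longlonglongrightarrow> 1\<^sub>m N $$ (a,b)"
    and i: "i < N" and k: "k < N"
  shows "(\<lambda>J. P J $$ (i,k)) \<longlonglongrightarrow> E $$ (i,k)"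
proof -
  have det_lim: "(\<lambda>J. Determinant.det (G J)) \<longlonglongrightarrow> 1"
    using tendsto_det[OF G _ G_lim] by simp
  have adj_lim: "(\<lambda>J. adj_mat (G J) $$ (a,b)) \<longlonglongrightarrow> 1\<^sub>m N $$ (a,b)" if "a < N" "b < N" for a b
    using tendsto_adj_mat[OF G _ G_lim that] by (simp add: adj_mat_one)
  have P_eq: "P J $$ (i,k) = (E * adj_mat (G J)) $$ (i,k) / Determinant.det (G J)"
    if dG: "Determinant.det (G J) \<noteq> 0" for J
  proof -
    have adj: "adj_mat (G J) \<in> carrier_mat N N" by (rule adj_mat(1)[OF G])
    have "E * adj_mat (G J) = P J * (G J * adj_mat (G J))"
      unfolding PG[of J, symmetric] by (rule assoc_mult_mat[OF P G adj])
    also have "\<dots> = Determinant.det (G J) \<cdot>\<^sub>m P J"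
      using P[of J] by (simp add: adj_mat(2)[OF G] mult_smult_distrib[OF P one_carrier_mat])
    finally show ?thesis using dG i k P[of J] by simp
  qed
  have "(\<lambda>J. (E * adj_mat (G J)) $$ (i,k)) \<longlonglongrightarrow> (\<Sum>m<N. E $$ (i,m) * 1\<^sub>m N $$ (m,k))"
    unfolding index_mult_mat_sum[OF E adj_mat(1)[OF G] i k]
    by (intro tendsto_intros adj_lim) (use k in auto)
  also have "(\<Sum>m<N. E $$ (i,m) * 1\<^sub>m N $$ (m,k)) = E $$ (i,k)"
    using i k by (simp add: if_distrib cong: if_cong)
  finally have "(\<lambda>J. (E * adj_mat (G J)) $$ (i,k) / Determinant.det (G J)) \<longlonglongrightarrow> E $$ (i,k) / 1"
    by (rule tendsto_divide[OF _ det_lim]) simp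
  moreover have "\<forall>\<^sub>F J in sequentially. Determinant.det (G J) \<noteq> 0"
    by (rule tendsto_imp_eventually_ne[OF det_lim]) simp
  then have "\<forall>\<^sub>F J in sequentially. (E * adj_mat (G J)) $$ (i,k) / Determinant.det (G J) = P J $$ (i,k)"
    by eventually_elim (simp add: P_eq)
  ultimately show ?thesis by (simp add: tendsto_cong)
qed

lemma det_one_minus_smult_nonzero_near_0:
  assumes A: "A \<in> carrier_mat N N"
  shows "\<exists>\<delta>>0. \<forall>t. cmod t < \<delta> \<longrightarrow> Determinant.det (1\<^sub>m N - t \<cdot>\<^sub>m A) \<noteq> 0"
proof -
  have "((\<lambda>t. Determinant.det (1\<^sub>m N - t \<cdot>\<^sub>m A)) \<longlongrightarrow> Determinant.det (1\<^sub>m N - (0::complex) \<cdot>\<^sub>m A)) (nhds 0)"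
    by (rule tendsto_det[where N=N]) (use A in \<open>auto intro!: tendsto_eq_intros filterlim_ident\<close>)
  moreover have "1\<^sub>m N - (0::complex) \<cdot>\<^sub>m A = 1\<^sub>m N" by (rule eq_matI) (use A in auto)
  ultimately have "\<forall>\<^sub>F t in nhds (0::complex). Determinant.det (1\<^sub>m N - t \<cdot>\<^sub>m A) \<noteq> 0"
    by (intro tendsto_imp_eventually_ne) auto
  then show ?thesis unfolding eventually_nhds_metric by (auto simp: dist_norm)
qed

lemma eventually_nhds_0_iff_norm:
  "(\<forall>\<^sub>F z in nhds 0. P z) \<longleftrightarrow> (\<exists>r>0. \<forall>z :: 'a :: real_normed_vector. norm z < r \<longrightarrow> P z)"
  by (simp add: eventually_nhds_metric dist_norm)

definition mat_sums :: "(nat \<Rightarrow> 'a :: real_normed_algebra_1 mat) \<Rightarrow> 'a mat \<Rightarrow> bool" where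
  "mat_sums f S \<longleftrightarrow> (\<forall>i<dim_row S. \<forall>j<dim_col S. (\<lambda>k. f k $$ (i,j)) sums S $$ (i,j))"

lemma mat_sums_mult_left:
  assumes C: "C \<in> carrier_mat n N" and f: "\<And>k. f k \<in> carrier_mat N M"
    and S: "S \<in> carrier_mat N M" and sums: "mat_sums f S"
  shows "mat_sums (\<lambda>k. C * f k) (C * S)"
  unfolding mat_sums_def
proof (intro allI impI)
  fix i j assume "i < dim_row (C * S)" "j < dim_col (C * S)"
  then have ij: "i < n" "j < M" using C S by auto
  have "(\<lambda>k. \<Sum>a<N. C $$ (i,a) * f k $$ (a,j)) sums (\<Sum>a<N. C $$ (i,a) * S $$ (a,j))"
    using sums S ij unfolding mat_sums_def by (intro sums_sum sums_mult) auto
  then show "(\<lambda>k. (C * f k) $$ (i,j)) sums (C * S) $$ (i,j)"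
    by (simp add: index_mult_mat_sum[OF C f ij] index_mult_mat_sum[OF C S ij])
qed

lemma mat_sums_mult_right:
  assumes B: "B \<in> carrier_mat M m" and f: "\<And>k. f k \<in> carrier_mat N M"
    and S: "S \<in> carrier_mat N M" and sums: "mat_sums f S"
  shows "mat_sums (\<lambda>k. f k * B) (S * B)"
  unfolding mat_sums_def
proof (intro allI impI)
  fix i j assume "i < dim_row (S * B)" "j < dim_col (S * B)"
  then have ij: "i < N" "j < m" using B S by auto
  have "(\<lambda>k. \<Sum>a<M. f k $$ (i,a) * B $$ (a,j)) sums (\<Sum>a<M. S $$ (i,a) * B $$ (a,j))"
    using sums S ij unfolding mat_sums_def by (intro sums_sum sums_mult2) auto
  then show "(\<lambda>k. (f k * B) $$ (i,j)) sums (S * B) $$ (i,j)"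
    by (simp add: index_mult_mat_sum[OF f B ij] index_mult_mat_sum[OF S B ij])
qed

section \<open>The \<open>q\<close>-exponential of a matrix\<close>

lemma qint_ge_1:
  assumes "0 \<le> q" shows "1 \<le> qint q k"
proof (cases k)
  case (Suc k')
  have "q ^ 0 \<le> (\<Sum>j<k. q ^ j)"
    by (rule member_le_sum) (use Suc assms in auto)
  then show ?thesis using Suc by (simp add: qint_def)
qed (simp add: qint_def)

lemma qfact_0 [simp]: "qfact q 0 = 1"
  by (simp add: qfact_def)

lemma qfact_ge_1: "0 \<le> q \<Longrightarrow> 1 \<le> qfact q k"
  unfolding qfact_def by (rule prod_ge_1) (auto intro: qint_ge_1)

lemma qfact_Suc: "qfact q (Suc k) = qfact q k * qint q (Suc k)"
  unfolding qfact_def by (simp add: atLeastAtMostSuc_conv mult.commute)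

lemma one_minus_q_mult_qint: "(1 - q) * qint q (Suc k) = 1 - q ^ Suc k"
  unfolding qint_def using one_diff_power_eq[of q "Suc k"] by simp

definition qexp_coeff :: "real \<Rightarrow> complex \<Rightarrow> nat \<Rightarrow> complex" where
  "qexp_coeff q z k = z ^ k / complex_of_real (qfact q k)"

lemma qexp_coeff_Suc:
  assumes "0 \<le> q"
  shows "complex_of_real (1 - q) * z * qexp_coeff q z k = (1 - complex_of_real q ^ Suc k) * qexp_coeff q z (Suc k)"
proof -
  have "qint q (Suc k) \<noteq> 0" "qfact q k \<noteq> 0"
    using qint_ge_1[OF assms] qfact_ge_1[OF assms] by (metis not_one_le_zero)+
  moreover have "complex_of_real (1 - q) * complex_of_real (qint q (Suc k)) = 1 - complex_of_real q ^ Suc k"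
    using arg_cong[OF one_minus_q_mult_qint[of q k], of complex_of_real] by simp
  moreover have "c * i = d \<Longrightarrow> i \<noteq> 0 \<Longrightarrow> f \<noteq> 0 \<Longrightarrow> c * z * (z ^ k / f) = d * (z ^ Suc k / (f * i))"
    for c i d f :: complex
    by (simp add: field_simps flip: power_Suc)
  ultimately show ?thesis
    unfolding qexp_coeff_def qfact_Suc of_real_mult by simp
qed

lemma qexp_coeff_scale: "qexp_coeff q (complex_of_real q * z) k = complex_of_real q ^ k * qexp_coeff q z k"
  unfolding qexp_coeff_def by (simp add: power_mult_distrib)

lemma norm_qexp_coeff_le: "0 \<le> q \<Longrightarrow> cmod (qexp_coeff q z k) \<le> cmod z ^ k"
  using qfact_ge_1[of q k]
  by (auto simp: qexp_coeff_def norm_divide norm_power divide_le_eq intro: mult_le_cancel_left1[THEN iffD2])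

definition mat_entry_norm :: "complex mat \<Rightarrow> real" where
  "mat_entry_norm A = (\<Sum>a<dim_row A. \<Sum>b<dim_col A. cmod (A $$ (a,b)))"

lemma mat_entry_norm_nonneg: "0 \<le> mat_entry_norm A"
  unfolding mat_entry_norm_def by (intro sum_nonneg) auto

lemma norm_pow_mat_entry_le:
  assumes A: "A \<in> carrier_mat N N" and i: "i < N" and l: "l < N"
  shows "cmod ((A ^\<^sub>m k) $$ (i,l)) \<le> mat_entry_norm A ^ k"
  using l
proof (induction k arbitrary: l)
  case 0 then show ?case using A i by simp
next
  case (Suc k)
  have col: "(\<Sum>m<N. cmod (A $$ (m,l))) \<le> mat_entry_norm A"
    unfolding mat_entry_norm_def using A Suc.prems by (auto intro!: sum_mono member_le_sum)
  have "cmod ((A ^\<^sub>m Suc k) $$ (i,l)) = cmod (\<Sum>m<N. (A ^\<^sub>m k) $$ (i,m) * A $$ (m,l))"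
    using index_mult_mat_sum[OF pow_carrier_mat[OF A] A i Suc.prems] by simp
  also have "\<dots> \<le> (\<Sum>m<N. cmod ((A ^\<^sub>m k) $$ (i,m)) * cmod (A $$ (m,l)))"
    by (rule order_trans[OF norm_sum]) (simp add: norm_mult)
  also have "\<dots> \<le> (\<Sum>m<N. mat_entry_norm A ^ k * cmod (A $$ (m,l)))"
    by (intro sum_mono mult_right_mono Suc.IH) auto
  also have "\<dots> \<le> mat_entry_norm A ^ k * mat_entry_norm A"
    using col by (simp add: sum_distrib_left[symmetric] mult_left_mono mat_entry_norm_nonneg)
  finally show ?case by (simp add: mult.commute)
qed

text \<open>The \<open>q\<close>-Borel transform of \<open>(I - z A)\<^sup>-\<^sup>1\<close>; the series converges for \<open>|z| \<cdot> mat_entry_norm A < 1\<close>.\<close>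
definition qexp_mat :: "real \<Rightarrow> complex mat \<Rightarrow> complex \<Rightarrow> complex mat" where
  "qexp_mat q A z = mat (dim_row A) (dim_row A) (\<lambda>(i,l). \<Sum>k. qexp_coeff q z k * (A ^\<^sub>m k) $$ (i,l))"

lemma qexp_mat_carrier: "A \<in> carrier_mat N N \<Longrightarrow> qexp_mat q A z \<in> carrier_mat N N"
  unfolding qexp_mat_def by auto

lemma norm_qexp_term_le:
  assumes "0 \<le> q" "A \<in> carrier_mat N N" "i < N" "l < N"
  shows "cmod (qexp_coeff q z k * (A ^\<^sub>m k) $$ (i,l)) \<le> (cmod z * mat_entry_norm A) ^ k"
  unfolding norm_mult power_mult_distrib
  by (intro mult_mono norm_qexp_coeff_le norm_pow_mat_entry_le) (use assms in auto)

lemma summable_norm_qexp_term: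
  assumes "0 \<le> q" "A \<in> carrier_mat N N" "i < N" "l < N" "cmod z * mat_entry_norm A < 1"
  shows "summable (\<lambda>k. cmod (qexp_coeff q z k * (A ^\<^sub>m k) $$ (i,l)))"
  by (rule summable_comparison_test[OF _ summable_geometric[of "cmod z * mat_entry_norm A"]])
     (use assms norm_qexp_term_le[OF assms(1-4)] mat_entry_norm_nonneg in auto)

lemma sums_qexp_mat_entry:
  assumes q: "0 \<le> q" and A: "A \<in> carrier_mat N N" and il: "i < N" "l < N"
    and z: "cmod z * mat_entry_norm A < 1"
  shows "(\<lambda>k. qexp_coeff q z k * (A ^\<^sub>m k) $$ (i,l)) sums qexp_mat q A z $$ (i,l)"
  using summable_sums[OF summable_norm_cancel[OF summable_norm_qexp_term[OF q A il z]]] A il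
  by (simp add: qexp_mat_def)

lemma qexp_mat_sums:
  assumes q: "0 \<le> q" and A: "A \<in> carrier_mat N N" and z: "cmod z * mat_entry_norm A < 1"
  shows "mat_sums (\<lambda>k. qexp_coeff q z k \<cdot>\<^sub>m A ^\<^sub>m k) (qexp_mat q A z)"
  using sums_qexp_mat_entry[OF q A _ _ z] qexp_mat_carrier[OF A, of q z] A
  by (auto simp: mat_sums_def)

lemma sums_one_minus_power_Suc_mult:
  fixes e :: "nat \<Rightarrow> 'a :: real_normed_algebra_1"
  assumes "e sums S" and "(\<lambda>k. c ^ k * e k) sums S'"
  shows "(\<lambda>k. (1 - c ^ Suc k) * e (Suc k)) sums (S - S')"
proof -
  have "(\<lambda>k. e k - c ^ k * e k) sums (S - S')" by (rule sums_diff[OF assms])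
  then show ?thesis by (subst sums_Suc_iff) (simp add: left_diff_distrib)
qed

lemma qexp_mat_functional_eq:
  assumes q: "0 \<le> q" "q < 1" and A: "A \<in> carrier_mat N N" and z: "cmod z * mat_entry_norm A < 1"
  shows "(1\<^sub>m N - (complex_of_real (1 - q) * z) \<cdot>\<^sub>m A) * qexp_mat q A z = qexp_mat q A (complex_of_real q * z)"
proof (rule eq_matI)
  let ?w = "complex_of_real (1 - q) * z" and ?E = "qexp_mat q A z" and ?qE = "qexp_mat q A (complex_of_real q * z)"
  have E: "?E \<in> carrier_mat N N" and qE: "?qE \<in> carrier_mat N N" by (rule qexp_mat_carrier[OF A])+
  have qz: "cmod (complex_of_real q * z) * mat_entry_norm A < 1"
    using q z mat_entry_norm_nonneg[of A] unfolding norm_mult norm_of_real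
    by (smt (verit, best) mult_left_le_one_le mult_nonneg_nonneg mult.assoc norm_ge_zero)
  fix i l assume "i < dim_row ?qE" "l < dim_col ?qE"
  then have il: "i < N" "l < N" using qE by auto
  let ?e = "\<lambda>k. qexp_coeff q z k * (A ^\<^sub>m k) $$ (i,l)"
  have "(\<lambda>k. (1 - complex_of_real q ^ Suc k) * ?e (Suc k)) sums (?E $$ (i,l) - ?qE $$ (i,l))"
    using sums_qexp_mat_entry[OF q(1) A il z] sums_qexp_mat_entry[OF q(1) A il qz]
    by (intro sums_one_minus_power_Suc_mult) (simp_all add: qexp_coeff_scale mult.assoc)
  moreover have "(\<lambda>k. (1 - complex_of_real q ^ Suc k) * ?e (Suc k)) sums (?w * (A * ?E) $$ (i,l))"
  proof -
    have "mat_sums (\<lambda>k. A * (qexp_coeff q z k \<cdot>\<^sub>m A ^\<^sub>m k)) (A * ?E)"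
      using A by (intro mat_sums_mult_left[OF A _ E qexp_mat_sums[OF q(1) A z]]) simp
    then have "(\<lambda>k. ?w * (A * (qexp_coeff q z k \<cdot>\<^sub>m A ^\<^sub>m k)) $$ (i,l)) sums (?w * (A * ?E) $$ (i,l))"
      using il A E by (intro sums_mult) (simp add: mat_sums_def)
    moreover have "?w * (A * (qexp_coeff q z k \<cdot>\<^sub>m A ^\<^sub>m k)) $$ (i,l) = (1 - complex_of_real q ^ Suc k) * ?e (Suc k)" for k
    proof -
      have "A * (qexp_coeff q z k \<cdot>\<^sub>m A ^\<^sub>m k) = qexp_coeff q z k \<cdot>\<^sub>m A ^\<^sub>m Suc k"
        by (simp only: mult_smult_distrib[OF A pow_carrier_mat[OF A]] pow_mat_Suc_left[OF A])
      then have "?w * (A * (qexp_coeff q z k \<cdot>\<^sub>m A ^\<^sub>m k)) $$ (i,l) = (?w * qexp_coeff q z k) * (A ^\<^sub>m Suc k) $$ (i,l)"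
        using il A by simp
      also have "\<dots> = (1 - complex_of_real q ^ Suc k) * qexp_coeff q z (Suc k) * (A ^\<^sub>m Suc k) $$ (i,l)"
        by (simp only: qexp_coeff_Suc[OF q(1)])
      finally show ?thesis by (simp only: mult.assoc)
    qed
    ultimately show ?thesis by simp
  qed
  ultimately have "?w * (A * ?E) $$ (i,l) = ?E $$ (i,l) - ?qE $$ (i,l)"
    by (rule sums_unique2[symmetric])
  moreover have "((1\<^sub>m N - ?w \<cdot>\<^sub>m A) * ?E) $$ (i,l) = ?E $$ (i,l) - ?w * (A * ?E) $$ (i,l)"
    using il A E by (simp add: minus_mult_distrib_mat[of _ N N _ _ N] mult_smult_assoc_mat[OF A E])
  ultimately show "((1\<^sub>m N - ?w \<cdot>\<^sub>m A) * ?E) $$ (i,l) = ?qE $$ (i,l)"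
    by simp
qed (use A in \<open>auto simp: qexp_mat_def\<close>)

lemma norm_qexp_mat_minus_one_le:
  assumes q: "0 \<le> q" and A: "A \<in> carrier_mat N N" and i: "i < N" and l: "l < N"
    and w: "cmod w * mat_entry_norm A \<le> 1/2"
  shows "cmod (qexp_mat q A w $$ (i,l) - 1\<^sub>m N $$ (i,l)) \<le> 2 * (cmod w * mat_entry_norm A)"
proof -
  define x where "x = cmod w * mat_entry_norm A"
  define f where "f k = qexp_coeff q w k * (A ^\<^sub>m k) $$ (i,l)" for k
  have x: "0 \<le> x" "x \<le> 1/2" unfolding x_def using mat_entry_norm_nonneg w by auto
  have summable_f: "summable (\<lambda>k. cmod (f k))" unfolding f_def
    by (rule summable_norm_qexp_term[OF q A i l]) (use w in simp)
  then have summable_f_Suc: "summable (\<lambda>k. cmod (f (Suc k)))"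
    using summable_ignore_initial_segment[of _ 1] by fastforce
  have "qexp_mat q A w $$ (i,l) - 1\<^sub>m N $$ (i,l) = (\<Sum>k. f (Suc k))"
    using suminf_split_head[OF summable_norm_cancel[OF summable_f]] A i l
    by (simp add: qexp_mat_def f_def qexp_coeff_def)
  also have "cmod \<dots> \<le> (\<Sum>k. cmod (f (Suc k)))"
    by (rule summable_norm[OF summable_f_Suc])
  also have "\<dots> \<le> (\<Sum>k. x * x ^ k)"
  proof (rule suminf_le[OF _ summable_f_Suc])
    show "cmod (f (Suc k)) \<le> x * x ^ k" for k
      using norm_qexp_term_le[OF q A i l, of w "Suc k"] by (simp add: f_def x_def)
    show "summable (\<lambda>k. x * x ^ k)"
      using x by (intro summable_mult summable_geometric) simp
  qed
  also have "\<dots> = x / (1 - x)"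
    using x by (simp add: suminf_mult suminf_geometric summable_geometric)
  also have "\<dots> \<le> 2 * x"
    using x mult_nonneg_nonneg[of x "1 - 2*x"] by (simp add: divide_le_eq algebra_simps)
  finally show ?thesis unfolding x_def .
qed

section \<open>Convergence of the infinite product\<close>

lemma norm_qpow_mult_le: "0 \<le> q \<Longrightarrow> q < 1 \<Longrightarrow> cmod (complex_of_real q ^ J * z) \<le> cmod z"
  by (simp add: norm_mult norm_power mult_left_le_one_le power_le_one)

lemma qpartial_carrier:
  assumes A: "A \<in> carrier_mat N N"
    and d: "\<And>j. Determinant.det (1\<^sub>m N - (complex_of_real (1 - q) * z * complex_of_real q ^ j) \<cdot>\<^sub>m A) \<noteq> 0"
  shows "qpartial q A z J \<in> carrier_mat N N"
proof (induction J)
  case (Suc J)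
  have "minv (1\<^sub>m N - (complex_of_real (1 - q) * z * complex_of_real q ^ J) \<cdot>\<^sub>m A) \<in> carrier_mat N N"
    by (rule minv_correct(1)[OF _ d]) (use A in auto)
  then show ?case using Suc A by simp
qed (use A in simp)

text \<open>Telescoping the functional equation.\<close>
lemma qpartial_mult_qexp_mat:
  assumes q: "0 \<le> q" "q < 1" and A: "A \<in> carrier_mat N N"
    and d: "\<And>j. Determinant.det (1\<^sub>m N - (complex_of_real (1 - q) * z * complex_of_real q ^ j) \<cdot>\<^sub>m A) \<noteq> 0"
    and z: "cmod z * mat_entry_norm A < 1"
  shows "qpartial q A z J * qexp_mat q A (complex_of_real q ^ J * z) = qexp_mat q A z"
proof (induction J)
  case 0 then show ?case using A by (simp add: left_mult_one_mat[OF qexp_mat_carrier[OF A]])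
next
  case (Suc J)
  define M where "M = 1\<^sub>m N - (complex_of_real (1 - q) * z * complex_of_real q ^ J) \<cdot>\<^sub>m A"
  define P where "P = qpartial q A z J"
  define G where "G = qexp_mat q A (complex_of_real q ^ J * z)"
  have M: "M \<in> carrier_mat N N" unfolding M_def using A by auto
  have P: "P \<in> carrier_mat N N" unfolding P_def by (rule qpartial_carrier[OF A d])
  have G: "G \<in> carrier_mat N N" unfolding G_def by (rule qexp_mat_carrier[OF A])
  have Minv: "minv M \<in> carrier_mat N N" "minv M * M = 1\<^sub>m N"
    using minv_correct[OF M d[of J, folded M_def]] by auto
  have "cmod (complex_of_real q ^ J * z) * mat_entry_norm A < 1"
    using norm_qpow_mult_le[OF q, of J z] mat_entry_norm_nonneg[of A] z
    by (meson le_less_trans mult_right_mono)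
  from qexp_mat_functional_eq[OF q A this]
  have "M * G = qexp_mat q A (complex_of_real q ^ Suc J * z)"
    unfolding M_def G_def by (simp add: ac_simps)
  then have "qpartial q A z (Suc J) * qexp_mat q A (complex_of_real q ^ Suc J * z) = (P * minv M) * (M * G)"
    using A by (simp add: P_def M_def)
  also have "\<dots> = P * (minv M * (M * G))"
    by (rule assoc_mult_mat[OF P Minv(1) mult_carrier_mat[OF M G]])
  also have "minv M * (M * G) = (minv M * M) * G"
    by (rule assoc_mult_mat[OF Minv(1) M G, symmetric])
  also have "\<dots> = G" using Minv G by simp
  finally show ?case using Suc unfolding P_def G_def by simp
qed

lemma qexp_mat_tendsto_one:
  assumes q: "0 \<le> q" "q < 1" and A: "A \<in> carrier_mat N N" and a: "a < N" and b: "b < N"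
    and z: "cmod z * mat_entry_norm A \<le> 1/2"
  shows "(\<lambda>J. qexp_mat q A (complex_of_real q ^ J * z) $$ (a,b)) \<longlonglongrightarrow> 1\<^sub>m N $$ (a,b)"
proof (rule LIM_zero_cancel, rule Lim_null_comparison)
  show "\<forall>\<^sub>F J in sequentially. norm (qexp_mat q A (complex_of_real q ^ J * z) $$ (a,b) - 1\<^sub>m N $$ (a,b))
          \<le> 2 * (q ^ J * cmod z * mat_entry_norm A)"
  proof (rule always_eventually, rule allI)
    fix J
    have "cmod (complex_of_real q ^ J * z) * mat_entry_norm A \<le> 1/2"
      using norm_qpow_mult_le[OF q, of J z] z mat_entry_norm_nonneg[of A]
      by (meson mult_right_mono order_trans)
    from norm_qexp_mat_minus_one_le[OF q(1) A a b this]
    show "norm (qexp_mat q A (complex_of_real q ^ J * z) $$ (a,b) - 1\<^sub>m N $$ (a,b))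
          \<le> 2 * (q ^ J * cmod z * mat_entry_norm A)"
      using q by (simp add: norm_mult norm_power)
  qed
  have "(\<lambda>J. q ^ J) \<longlonglongrightarrow> 0" using q by (intro LIMSEQ_power_zero) simp
  then show "(\<lambda>J. 2 * (q ^ J * cmod z * mat_entry_norm A)) \<longlonglongrightarrow> 0"
    by (intro tendsto_mult_right_zero tendsto_mult_left_zero)
qed

lemma qpartial_tendsto_qexp_mat:
  assumes q: "0 \<le> q" "q < 1" and A: "A \<in> carrier_mat N N"
    and d: "\<And>j. Determinant.det (1\<^sub>m N - (complex_of_real (1 - q) * z * complex_of_real q ^ j) \<cdot>\<^sub>m A) \<noteq> 0"
    and z: "cmod z * mat_entry_norm A \<le> 1/2" and i: "i < N" and k: "k < N"
  shows "(\<lambda>J. qpartial q A z J $$ (i,k)) \<longlonglongrightarrow> qexp_mat q A z $$ (i,k)"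
  using z by (intro tendsto_of_mult_tendsto_one[OF qpartial_carrier[OF A d] qexp_mat_carrier[OF A]
      qexp_mat_carrier[OF A] qpartial_mult_qexp_mat[OF q A d] qexp_mat_tendsto_one[OF q A] i k]) auto

lemma eventually_qfactors_nonsingular:
  assumes q: "0 \<le> q" "q < 1" and A: "A \<in> carrier_mat N N"
  shows "\<forall>\<^sub>F z in nhds 0. cmod z * mat_entry_norm A < 1/2 \<and>
     (\<forall>j. Determinant.det (1\<^sub>m N - (complex_of_real (1 - q) * z * complex_of_real q ^ j) \<cdot>\<^sub>m A) \<noteq> 0)"
proof -
  obtain \<delta> where \<delta>: "\<delta> > 0" "\<And>t. cmod t < \<delta> \<Longrightarrow> Determinant.det (1\<^sub>m N - t \<cdot>\<^sub>m A) \<noteq> 0"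
    using det_one_minus_smult_nonzero_near_0[OF A] by blast
  have "((\<lambda>z. cmod z * mat_entry_norm A) \<longlongrightarrow> 0) (nhds (0 :: complex))"
    by (auto intro!: tendsto_eq_intros filterlim_ident)
  then have "\<forall>\<^sub>F z in nhds 0. cmod z * mat_entry_norm A < 1/2"
    by (rule order_tendstoD) simp
  moreover have "\<forall>\<^sub>F z in nhds 0. cmod z < \<delta>"
    using \<delta>(1) by (auto simp: eventually_nhds_0_iff_norm)
  ultimately show ?thesis
  proof eventually_elim
    case (elim z)
    have "cmod (complex_of_real (1 - q) * z * complex_of_real q ^ j) \<le> cmod z" for j
      using q mult_left_le_one_le[of "cmod z" "(1 - q) * q ^ j"] mult_le_one[of "1 - q" "q ^ j"]
      by (simp add: norm_mult norm_power power_le_one ac_simps del: of_real_diff)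
    then show ?case using elim \<delta>(2) le_less_trans by blast
  qed
qed

text \<open>The infinite product in the definition of \<open>q\<close>-rationality is always \<open>qexp_mat q A z\<close>.\<close>
lemma q_rational_iff_qexp_mat:
  assumes q: "0 \<le> q" "q < 1"
  shows "q_rational q n m T \<longleftrightarrow> (\<exists>N C A B. C \<in> carrier_mat n N \<and> A \<in> carrier_mat N N \<and> B \<in> carrier_mat N m \<and>
           (\<forall>\<^sub>F z in nhds 0. T z = C * qexp_mat q A z * B))"
proof -
  have product_eq: "(\<forall>j. invertible_mat (1\<^sub>m N - (complex_of_real (1 - q) * z * complex_of_real q ^ j) \<cdot>\<^sub>m A)) \<and>
      (\<exists>P. P \<in> carrier_mat N N \<and> (\<forall>i<N. \<forall>k<N. (\<lambda>J. qpartial q A z J $$ (i, k)) \<longlonglongrightarrow> P $$ (i, k)) \<and>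
        T z = C * P * B)
    \<longleftrightarrow> T z = C * qexp_mat q A z * B"
    if A: "A \<in> carrier_mat N N" and z: "cmod z * mat_entry_norm A < 1/2"
      and d: "\<And>j. Determinant.det (1\<^sub>m N - (complex_of_real (1 - q) * z * complex_of_real q ^ j) \<cdot>\<^sub>m A) \<noteq> 0"
    for N A B C z
  proof -
    have lim: "(\<lambda>J. qpartial q A z J $$ (i,k)) \<longlonglongrightarrow> qexp_mat q A z $$ (i,k)" if "i < N" "k < N" for i k
      using z by (intro qpartial_tendsto_qexp_mat[OF q A d _ that]) simp
    have "P = qexp_mat q A z"
      if "P \<in> carrier_mat N N" "\<forall>i<N. \<forall>k<N. (\<lambda>J. qpartial q A z J $$ (i, k)) \<longlonglongrightarrow> P $$ (i, k)" for P
      using that qexp_mat_carrier[OF A, of q z] lim by (intro eq_matI) (auto intro: LIMSEQ_unique[OF _ lim])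
    moreover have "invertible_mat (1\<^sub>m N - (complex_of_real (1 - q) * z * complex_of_real q ^ j) \<cdot>\<^sub>m A)" for j
      by (rule minv_correct(3)[OF _ d]) (use A in auto)
    ultimately show ?thesis using lim qexp_mat_carrier[OF A, of q z] by blast
  qed
  have product_eventually_eq: "(\<forall>\<^sub>F z in nhds 0. (\<forall>j. invertible_mat (1\<^sub>m N - (complex_of_real (1 - q) * z * complex_of_real q ^ j) \<cdot>\<^sub>m A)) \<and>
      (\<exists>P. P \<in> carrier_mat N N \<and> (\<forall>i<N. \<forall>k<N. (\<lambda>J. qpartial q A z J $$ (i, k)) \<longlonglongrightarrow> P $$ (i, k)) \<and>
        T z = C * P * B))
    \<longleftrightarrow> (\<forall>\<^sub>F z in nhds 0. T z = C * qexp_mat q A z * B)"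
    if A: "A \<in> carrier_mat N N" for N A B C
    using eventually_qfactors_nonsingular[OF q A]
    by (intro eventually_subst) (rule eventually_mono, assumption, rule product_eq[OF A], auto)
  show ?thesis
    unfolding q_rational_def eventually_nhds_0_iff_norm[symmetric]
    by (intro ex_cong1 conj_cong refl) (simp only: product_eventually_eq)
qed

section \<open>\<open>q\<close>-Borel transforms of realized sequences\<close>

lemma sums_qexp_coeff_realization:
  assumes q: "0 \<le> q" and C: "C \<in> carrier_mat n N" and A: "A \<in> carrier_mat N N" and B: "B \<in> carrier_mat N m"
    and z: "cmod z * mat_entry_norm A < 1" and i: "i < n" and j: "j < m"
  shows "(\<lambda>k. qexp_coeff q z k * (C * A ^\<^sub>m k * B) $$ (i,j)) sums (C * qexp_mat q A z * B) $$ (i,j)"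
proof -
  have "mat_sums (\<lambda>k. C * (qexp_coeff q z k \<cdot>\<^sub>m A ^\<^sub>m k) * B) (C * qexp_mat q A z * B)"
    using C A B qexp_mat_carrier[OF A]
    by (intro mat_sums_mult_right mat_sums_mult_left qexp_mat_sums[OF q A z]) auto
  moreover have "C * (c \<cdot>\<^sub>m A ^\<^sub>m k) * B = c \<cdot>\<^sub>m (C * A ^\<^sub>m k * B)" for c k
    using C A B by (simp add: mult_smult_distrib[OF C pow_carrier_mat[OF A]]
        mult_smult_assoc_mat[OF mult_carrier_mat[OF C pow_carrier_mat[OF A]] B])
  ultimately show ?thesis
    using C A B i j qexp_mat_carrier[OF A, of q z] by (simp add: mat_sums_def)
qed

lemma q_Borel_of_iff_qexp_mat:
  assumes q: "0 \<le> q" and C: "C \<in> carrier_mat n N" and A: "A \<in> carrier_mat N N" and B: "B \<in> carrier_mat N m"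
    and T: "\<And>z. T z \<in> carrier_mat n m" and coeff: "\<And>k. rat_coeff n m p d k = C * A ^\<^sub>m k * B"
  shows "q_Borel_of q n m T p d \<longleftrightarrow> (\<forall>\<^sub>F z in nhds 0. T z = C * qexp_mat q A z * B)"
proof -
  have sums_iff: "(\<forall>i<n. \<forall>j<m. (\<lambda>k. qexp_coeff q z k * rat_coeff n m p d k $$ (i,j)) sums T z $$ (i,j))
      \<longleftrightarrow> T z = C * qexp_mat q A z * B"
    if z: "cmod z * mat_entry_norm A < 1" for z
  proof -
    have sums: "(\<lambda>k. qexp_coeff q z k * rat_coeff n m p d k $$ (i,j)) sums (C * qexp_mat q A z * B) $$ (i,j)"
      if "i < n" "j < m" for i j
      unfolding coeff using sums_qexp_coeff_realization[OF q C A B z that] .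
    have CEB: "C * qexp_mat q A z * B \<in> carrier_mat n m" using C B qexp_mat_carrier[OF A] by auto
    show ?thesis
    proof
      assume Tsums: "\<forall>i<n. \<forall>j<m. (\<lambda>k. qexp_coeff q z k * rat_coeff n m p d k $$ (i,j)) sums T z $$ (i,j)"
      show "T z = C * qexp_mat q A z * B"
      proof (rule eq_matI)
        fix i j assume "i < dim_row (C * qexp_mat q A z * B)" "j < dim_col (C * qexp_mat q A z * B)"
        then have ij: "i < n" "j < m" using CEB by auto
        show "T z $$ (i,j) = (C * qexp_mat q A z * B) $$ (i,j)"
          using Tsums ij by (intro sums_unique2[OF _ sums[OF ij]]) blast
      qed (use T[of z] CEB in auto)
    qed (use sums in auto)
  qed
  have "((\<lambda>z. cmod z * mat_entry_norm A) \<longlongrightarrow> 0) (nhds (0 :: complex))"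
    by (auto intro!: tendsto_eq_intros filterlim_ident)
  then have "\<forall>\<^sub>F z in nhds 0. cmod z * mat_entry_norm A < 1"
    by (rule order_tendstoD) simp
  then show ?thesis
    unfolding q_Borel_of_def eventually_nhds_0_iff_norm[symmetric] qexp_coeff_def[symmetric]
    by (intro eventually_subst) (rule eventually_mono, assumption, rule sums_iff)
qed

section \<open>Realized sequences are Taylor coefficients of rational functions\<close>

definition one_minus_X_mult_mat :: "'a :: comm_ring_1 mat \<Rightarrow> 'a poly mat" where
  "one_minus_X_mult_mat A = mat (dim_row A) (dim_row A) (\<lambda>(a,b). [:if a = b then 1 else 0:] - [:0, A $$ (a,b):])"

definition fps_powers_mat :: "'a :: semiring_1 mat \<Rightarrow> 'a fps mat" where
  "fps_powers_mat A = mat (dim_row A) (dim_row A) (\<lambda>(a,b). Abs_fps (\<lambda>k. (A ^\<^sub>m k) $$ (a,b)))"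

lemma one_minus_X_mult_mat_mult_fps_powers_mat:
  fixes A :: "'a :: comm_ring_1 mat"
  assumes A: "A \<in> carrier_mat N N"
  shows "map_mat fps_of_poly (one_minus_X_mult_mat A) * fps_powers_mat A = 1\<^sub>m N"
    (is "?M * ?G = _")
proof (rule eq_matI)
  fix a b assume "a < dim_row (1\<^sub>m N :: 'a fps mat)" "b < dim_col (1\<^sub>m N :: 'a fps mat)"
  then have ab: "a < N" "b < N" by auto
  have M: "?M \<in> carrier_mat N N" and G: "?G \<in> carrier_mat N N"
    using A by (auto simp: one_minus_X_mult_mat_def fps_powers_mat_def)
  show "(?M * ?G) $$ (a,b) = 1\<^sub>m N $$ (a,b)"
  proof (rule fps_ext)
    fix k
    have entry: "fps_nth (?M $$ (a,c) * ?G $$ (c,b)) k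
        = (if a = c then (A ^\<^sub>m k) $$ (c,b) else 0) - (if k = 0 then 0 else A $$ (a,c) * (A ^\<^sub>m (k - 1)) $$ (c,b))"
      if c: "c < N" for c
    proof -
      have "?M $$ (a,c) = fps_of_poly ([:if a = c then 1 else 0:] - [:0, A $$ (a,c):])"
        using A ab c by (simp add: one_minus_X_mult_mat_def)
      also have "\<dots> = fps_const (if a = c then 1 else 0) - fps_const (A $$ (a,c)) * fps_X"
        unfolding fps_of_poly_diff fps_of_poly_const fps_of_poly_pCons by simp
      finally have "?M $$ (a,c) * ?G $$ (c,b)
         = fps_const (if a = c then 1 else 0) * ?G $$ (c,b) - fps_const (A $$ (a,c)) * (fps_X * ?G $$ (c,b))"
        by (simp only: left_diff_distrib mult.assoc)
      then show ?thesis using A c ab by (simp add: fps_powers_mat_def)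
    qed
    have "fps_nth ((?M * ?G) $$ (a,b)) k = (\<Sum>c<N. fps_nth (?M $$ (a,c) * ?G $$ (c,b)) k)"
      unfolding index_mult_mat_sum[OF M G ab] by (rule fps_sum_nth)
    also have "\<dots> = (\<Sum>c<N. (if a = c then (A ^\<^sub>m k) $$ (c,b) else 0)
        - (if k = 0 then 0 else A $$ (a,c) * (A ^\<^sub>m (k - 1)) $$ (c,b)))"
      by (rule sum.cong[OF refl], rule entry) simp
    also have "\<dots> = (A ^\<^sub>m k) $$ (a,b) - (if k = 0 then 0 else (A * A ^\<^sub>m (k - 1)) $$ (a,b))"
      using ab by (simp add: sum_subtractf index_mult_mat_sum[OF A pow_carrier_mat[OF A] ab])
    also have "\<dots> = fps_nth (1\<^sub>m N $$ (a,b)) k"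
      using ab A pow_mat_Suc_left[OF A, of "k - 1"] by (cases k) auto
    finally show "fps_nth ((?M * ?G) $$ (a,b)) k = fps_nth (1\<^sub>m N $$ (a,b)) k" .
  qed
qed (use A in \<open>auto simp: fps_powers_mat_def one_minus_X_mult_mat_def\<close>)

lemma fps_nth_realization:
  fixes A :: "'a :: comm_semiring_1 mat"
  assumes C: "C \<in> carrier_mat n N" and A: "A \<in> carrier_mat N N" and B: "B \<in> carrier_mat N m"
    and i: "i < n" and j: "j < m"
  shows "fps_nth ((map_mat fps_const C * fps_powers_mat A * map_mat fps_const B) $$ (i,j)) k = (C * A ^\<^sub>m k * B) $$ (i,j)"
proof -
  have C': "map_mat fps_const C \<in> carrier_mat n N" and G: "fps_powers_mat A \<in> carrier_mat N N"
    and B': "map_mat fps_const B \<in> carrier_mat N m"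
    using C A B by (auto simp: fps_powers_mat_def)
  have "(map_mat fps_const C * fps_powers_mat A * map_mat fps_const B) $$ (i,j)
      = (\<Sum>b<N. (\<Sum>a<N. map_mat fps_const C $$ (i,a) * fps_powers_mat A $$ (a,b)) * map_mat fps_const B $$ (b,j))"
    using i j by (simp add: index_mult_mat_sum[OF mult_carrier_mat[OF C' G] B' i j] index_mult_mat_sum[OF C' G])
  then have "fps_nth ((map_mat fps_const C * fps_powers_mat A * map_mat fps_const B) $$ (i,j)) k
      = (\<Sum>b<N. (\<Sum>a<N. C $$ (i,a) * (A ^\<^sub>m k) $$ (a,b)) * B $$ (b,j))"
    using i j C A B by (simp add: fps_sum_nth fps_powers_mat_def)
  also have "\<dots> = (C * A ^\<^sub>m k * B) $$ (i,j)"
    using i j by (simp add: index_mult_mat_sum[OF mult_carrier_mat[OF C pow_carrier_mat[OF A]] B i j]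
        index_mult_mat_sum[OF C pow_carrier_mat[OF A]])
  finally show ?thesis .
qed

interpretation fps_of_poly_hom: comm_ring_hom "fps_of_poly :: complex poly \<Rightarrow> complex fps"
  by unfold_locales (simp_all add: fps_of_poly_add fps_of_poly_mult)

text \<open>Cramer's rule for \<open>(I - X A)\<^sup>-\<^sup>1 = adj (I - X A) / det (I - X A)\<close> over formal power series.\<close>
lemma fps_of_poly_adj_one_minus_X_mult_mat:
  fixes C A B :: "complex mat"
  assumes C: "C \<in> carrier_mat n N" and A: "A \<in> carrier_mat N N" and B: "B \<in> carrier_mat N m"
  defines "Mp \<equiv> one_minus_X_mult_mat A"
  shows "map_mat fps_of_poly (map_mat (\<lambda>c. [:c:]) C * adj_mat Mp * map_mat (\<lambda>c. [:c:]) B)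
      = fps_of_poly (Determinant.det Mp) \<cdot>\<^sub>m (map_mat fps_const C * fps_powers_mat A * map_mat fps_const B)"
proof -
  define M where "M = map_mat fps_of_poly Mp"
  have Mp: "Mp \<in> carrier_mat N N" and M: "M \<in> carrier_mat N N" and G: "fps_powers_mat A \<in> carrier_mat N N"
    unfolding Mp_def M_def using A by (auto simp: one_minus_X_mult_mat_def fps_powers_mat_def)
  have Cp: "map_mat (\<lambda>c. [:c:]) C \<in> carrier_mat n N" and Bp: "map_mat (\<lambda>c. [:c:]) B \<in> carrier_mat N m"
    and adj: "adj_mat Mp \<in> carrier_mat N N" using C B adj_mat(1)[OF Mp] by auto
  have const: "map_mat fps_of_poly (map_mat (\<lambda>c. [:c:]) X) = map_mat fps_const X" for X :: "complex mat"
    by (rule eq_matI) (auto simp: fps_of_poly_const)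
  have "map_mat fps_of_poly (map_mat (\<lambda>c. [:c:]) C * adj_mat Mp * map_mat (\<lambda>c. [:c:]) B)
      = map_mat fps_const C * adj_mat M * map_mat fps_const B"
    by (simp add: fps_of_poly_hom.mat_hom_mult[OF mult_carrier_mat[OF Cp adj] Bp]
        fps_of_poly_hom.mat_hom_mult[OF Cp adj] fps_of_poly_hom.hom_adj_mat[OF Mp] const M_def)
  also have "adj_mat M = Determinant.det M \<cdot>\<^sub>m fps_powers_mat A"
    using one_minus_X_mult_mat_mult_fps_powers_mat[OF A]
    by (intro adj_mat_eq_det_smult_right_inverse[OF M G]) (simp add: M_def Mp_def)
  also have "Determinant.det M = fps_of_poly (Determinant.det Mp)" by (simp add: M_def)
  finally show ?thesis
    using C B G by (simp add: mult_smult_distrib[of _ n N _ N] mult_smult_assoc_mat[of _ n N _ m])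
qed

lemma fps_of_poly_det_one_minus_X_mult_mat_nth_0:
  fixes A :: "complex mat"
  assumes A: "A \<in> carrier_mat N N"
  shows "fps_nth (fps_of_poly (Determinant.det (one_minus_X_mult_mat A))) 0 \<noteq> 0"
proof -
  have M: "map_mat fps_of_poly (one_minus_X_mult_mat A) \<in> carrier_mat N N"
    and G: "fps_powers_mat A \<in> carrier_mat N N"
    using A by (auto simp: one_minus_X_mult_mat_def fps_powers_mat_def)
  have "fps_of_poly (Determinant.det (one_minus_X_mult_mat A)) * Determinant.det (fps_powers_mat A) = 1"
    using det_mult[OF M G] one_minus_X_mult_mat_mult_fps_powers_mat[OF A] by simp
  then show ?thesis by (metis fps_mult_nth_0 fps_one_nth mult_zero_left zero_neq_one)
qed

lemma rational_of_realization:
  assumes C: "C \<in> carrier_mat n N" and A: "A \<in> carrier_mat N N" and B: "B \<in> carrier_mat N m"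
  shows "\<exists>p d. (\<forall>i<n. \<forall>j<m. poly (d i j) 0 \<noteq> 0) \<and> (\<forall>k. rat_coeff n m p d k = C * A ^\<^sub>m k * B)"
proof -
  define Mp where "Mp = one_minus_X_mult_mat A"
  define d where "d = Determinant.det Mp"
  define P where "P = map_mat (\<lambda>c. [:c:]) C * adj_mat Mp * map_mat (\<lambda>c. [:c:]) B"
  have d0: "fps_nth (fps_of_poly d) 0 \<noteq> 0"
    unfolding d_def Mp_def by (rule fps_of_poly_det_one_minus_X_mult_mat_nth_0[OF A])
  have P: "P \<in> carrier_mat n m"
    using C B A adj_mat(1)[of Mp N] by (simp add: P_def Mp_def one_minus_X_mult_mat_def)
  have "rat_coeff n m (\<lambda>i j. P $$ (i,j)) (\<lambda>i j. d) k = C * A ^\<^sub>m k * B" for k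
  proof (rule eq_matI)
    fix i j assume "i < dim_row (C * A ^\<^sub>m k * B)" "j < dim_col (C * A ^\<^sub>m k * B)"
    then have ij: "i < n" "j < m" using C B by auto
    have "fps_of_poly (P $$ (i,j)) = map_mat fps_of_poly P $$ (i,j)" using P ij by simp
    also have "\<dots> = fps_of_poly d * (map_mat fps_const C * fps_powers_mat A * map_mat fps_const B) $$ (i,j)"
      using C B A ij unfolding P_def d_def Mp_def fps_of_poly_adj_one_minus_X_mult_mat[OF C A B]
      by (simp add: fps_powers_mat_def)
    finally have "fps_of_poly (P $$ (i,j)) / fps_of_poly d = (map_mat fps_const C * fps_powers_mat A * map_mat fps_const B) $$ (i,j)"
      unfolding fps_divide_unit[OF d0] using inverse_mult_eq_1[OF d0] by (simp add: ac_simps)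
    then show "rat_coeff n m (\<lambda>i j. P $$ (i,j)) (\<lambda>i j. d) k $$ (i,j) = (C * A ^\<^sub>m k * B) $$ (i,j)"
      using fps_nth_realization[OF C A B ij] ij by (simp add: rat_coeff_def)
  qed (use C B in \<open>auto simp: rat_coeff_def\<close>)
  moreover have "poly d 0 \<noteq> 0" using d0 by (simp add: poly_0_coeff_0)
  ultimately show ?thesis by (intro exI[of _ "\<lambda>i j. P $$ (i,j)"] exI[of _ "\<lambda>i j. d"]) auto
qed

section \<open>Taylor coefficients of rational functions are realized sequences\<close>

lemma fps_nth_linear_recurrence:
  fixes D Q :: "'a :: field poly" and F :: "'a fps"
  assumes DF: "fps_of_poly D * F = fps_of_poly Q" and D0: "coeff D 0 \<noteq> 0"
    and k: "degree Q < k" "degree D \<le> k"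
  shows "fps_nth F k = (\<Sum>l=1..degree D. - coeff D l / coeff D 0 * fps_nth F (k - l))"
proof -
  have "(\<Sum>l=0..k. coeff D l * fps_nth F (k - l)) = coeff Q k"
    using arg_cong[OF DF, of "\<lambda>G. fps_nth G k"] by (simp add: fps_mult_nth)
  also have "\<dots> = 0" using k(1) by (simp add: coeff_eq_0)
  also have "(\<Sum>l=0..k. coeff D l * fps_nth F (k - l)) = (\<Sum>l=0..degree D. coeff D l * fps_nth F (k - l))"
    by (rule sum.mono_neutral_right) (use k(2) in \<open>auto simp: coeff_eq_0\<close>)
  also have "\<dots> = coeff D 0 * fps_nth F k + (\<Sum>l=1..degree D. coeff D l * fps_nth F (k - l))"
    by (simp add: sum.atLeast_Suc_atMost)
  finally show ?thesis
    using D0 by (simp add: sum_divide_distrib[symmetric] sum_negf field_simps eq_neg_iff_add_eq_0)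
qed

text \<open>A common denominator \<open>D\<close> of all entries gives one recurrence for all of them.\<close>
lemma rational_coeffs_linear_recurrence:
  fixes p d :: "nat \<Rightarrow> nat \<Rightarrow> 'a :: field poly"
  assumes d0: "\<forall>i<n. \<forall>j<m. poly (d i j) 0 \<noteq> 0"
  shows "\<exists>L Dg c. 1 \<le> L \<and> Dg \<le> L \<and> (\<forall>i<n. \<forall>j<m. \<forall>k\<ge>L.
     fps_nth (fps_of_poly (p i j) / fps_of_poly (d i j)) k =
       (\<Sum>l=1..Dg. c l * fps_nth (fps_of_poly (p i j) / fps_of_poly (d i j)) (k - l)))"
proof -
  define D where "D = (\<Prod>i<n. \<Prod>j<m. d i j)"
  define Q where "Q i j = (D div d i j) * p i j" for i j
  define K where "K = (\<Sum>i<n. \<Sum>j<m. degree (Q i j))"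
  have D0: "coeff D 0 \<noteq> 0" unfolding D_def using d0 by (simp add: poly_prod poly_0_coeff_0[symmetric])
  have dvd: "d i j dvd D" if ij: "i < n" "j < m" for i j
  proof -
    have "d i j dvd (\<Prod>j<m. d i j)" by (rule dvd_prodI) (use ij in auto)
    also have "\<dots> dvd D" unfolding D_def by (rule dvd_prodI[where f="\<lambda>i. \<Prod>j<m. d i j"]) (use ij in auto)
    finally show ?thesis .
  qed
  have degK: "degree (Q i j) \<le> K" if ij: "i < n" "j < m" for i j
  proof -
    have "degree (Q i j) \<le> (\<Sum>j<m. degree (Q i j))"
      by (rule member_le_sum) (use ij in auto)
    also have "\<dots> \<le> K" unfolding K_def
      by (rule member_le_sum[where f="\<lambda>i. \<Sum>j<m. degree (Q i j)"]) (use ij in auto)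
    finally show ?thesis .
  qed
  have "fps_nth (fps_of_poly (p i j) / fps_of_poly (d i j)) k =
       (\<Sum>l=1..degree D. - coeff D l / coeff D 0 * fps_nth (fps_of_poly (p i j) / fps_of_poly (d i j)) (k - l))"
    if ij: "i < n" "j < m" and k: "K + degree D + 1 \<le> k" for i j k
  proof (rule fps_nth_linear_recurrence[OF _ D0])
    define F where "F = fps_of_poly (p i j) / fps_of_poly (d i j)"
    have d: "fps_nth (fps_of_poly (d i j)) 0 \<noteq> 0" using d0 ij by (simp add: poly_0_coeff_0)
    have dF: "fps_of_poly (d i j) * F = fps_of_poly (p i j)"
      unfolding F_def fps_divide_unit[OF d] using inverse_mult_eq_1[OF d] by (simp add: ac_simps)
    have "D = d i j * (D div d i j)" using dvd[OF ij] by simp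
    then have "fps_of_poly D * F = fps_of_poly (D div d i j) * (fps_of_poly (d i j) * F)"
      by (metis fps_of_poly_mult mult.assoc mult.commute)
    then show "fps_of_poly D * F = fps_of_poly (Q i j)"
      unfolding dF Q_def by (simp add: fps_of_poly_mult)
    show "degree (Q i j) < k" "degree D \<le> k" using degK[OF ij] k by auto
  qed
  then show ?thesis
    by (intro exI[of _ "K + degree D + 1"] exI[of _ "degree D"] exI[of _ "\<lambda>l. - coeff D l / coeff D 0"]) auto
qed

text \<open>Row \<open>s\<close> of the \<open>L \<times> L\<close> companion matrix of the recurrence
  \<open>g (k + L) = (\<Sum>l=1..Dg. c l * g (k + L - l))\<close>.\<close>
definition companion_entry :: "nat \<Rightarrow> nat \<Rightarrow> (nat \<Rightarrow> 'a :: zero_neq_one) \<Rightarrow> nat \<Rightarrow> nat \<Rightarrow> 'a" where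
  "companion_entry L Dg c s t =
     (if Suc s < L then (if t = Suc s then 1 else 0)
      else if 1 \<le> L - t \<and> L - t \<le> Dg then c (L - t) else 0)"

lemma companion_row_sum:
  fixes c g :: "nat \<Rightarrow> 'a :: comm_semiring_1"
  assumes s: "s < L" and Dg: "Dg \<le> L" and rec: "g (k + L) = (\<Sum>l=1..Dg. c l * g (k + L - l))"
  shows "(\<Sum>t<L. companion_entry L Dg c s t * g (k + t)) = g (Suc k + s)"
proof (cases "Suc s < L")
  case True
  then show ?thesis by (simp add: companion_entry_def if_distrib[of "\<lambda>x. x * _"] cong: if_cong)
next
  case False
  then have sL: "Suc s = L" using s by simp
  have "(\<Sum>t<L. companion_entry L Dg c s t * g (k + t)) = (\<Sum>t\<in>{L - Dg..<L}. c (L - t) * g (k + t))"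
    using False Dg by (intro sum.mono_neutral_cong_right) (auto simp: companion_entry_def)
  also have "\<dots> = (\<Sum>l=1..Dg. c l * g (k + L - l))"
    using Dg by (intro sum.reindex_bij_witness[of _ "\<lambda>l. L - l" "\<lambda>t. L - t"]) auto
  finally show ?thesis using rec sL[symmetric] by simp
qed

text \<open>Row \<open>t * n + i\<close> of \<open>stacked_terms L n m f k\<close> is row \<open>i\<close> of \<open>f (k + t)\<close>, so it stacks the
  \<open>L\<close> consecutive terms \<open>f k, \<dots>, f (k + L - 1)\<close>; \<open>companion_block_mat\<close> is the companion matrix
  acting on these blocks.\<close>
definition stacked_terms :: "nat \<Rightarrow> nat \<Rightarrow> nat \<Rightarrow> (nat \<Rightarrow> nat \<Rightarrow> nat \<Rightarrow> 'a) \<Rightarrow> nat \<Rightarrow> 'a mat" where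
  "stacked_terms L n m f k = mat (L * n) m (\<lambda>(x,j). f (x mod n) j (k + x div n))"

definition companion_block_mat :: "nat \<Rightarrow> nat \<Rightarrow> (nat \<Rightarrow> 'a :: zero_neq_one) \<Rightarrow> nat \<Rightarrow> 'a mat" where
  "companion_block_mat L Dg c n = mat (L * n) (L * n)
     (\<lambda>(x,y). if x mod n = y mod n then companion_entry L Dg c (x div n) (y div n) else 0)"

lemma sum_lessThan_mult_blocks:
  fixes L n :: nat
  shows "(\<Sum>y<L * n. h y) = (\<Sum>t<L. \<Sum>i<n. h (t * n + i))"
proof -
  have "(\<Sum>y\<in>{t * n..<t * n + n}. h y) = (\<Sum>i<n. h (t * n + i))" for t
    by (rule sum.reindex_bij_witness[of _ "\<lambda>i. t * n + i" "\<lambda>y. y - t * n"]) auto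
  then show ?thesis by (simp add: sum.nat_group[symmetric])
qed

lemma companion_block_mat_mult_stacked_terms:
  fixes f :: "nat \<Rightarrow> nat \<Rightarrow> nat \<Rightarrow> 'a :: comm_semiring_1"
  assumes Dg: "Dg \<le> L"
    and rec: "\<And>i j k. i < n \<Longrightarrow> j < m \<Longrightarrow> L \<le> k \<Longrightarrow> f i j k = (\<Sum>l=1..Dg. c l * f i j (k - l))"
  shows "companion_block_mat L Dg c n * stacked_terms L n m f k = stacked_terms L n m f (Suc k)"
proof (rule eq_matI)
  let ?A = "companion_block_mat L Dg c n" and ?X = "stacked_terms L n m f k"
  have A: "?A \<in> carrier_mat (L * n) (L * n)" and X: "?X \<in> carrier_mat (L * n) m"
    unfolding companion_block_mat_def stacked_terms_def by auto
  fix x j assume "x < dim_row (stacked_terms L n m f (Suc k))" "j < dim_col (stacked_terms L n m f (Suc k))"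
  then have x: "x < L * n" and j: "j < m" unfolding stacked_terms_def by auto
  then have n: "0 < n" by (cases n) auto
  have t: "x div n < L" using x n by (simp add: div_less_iff_less_mult)
  have idx: "t * n + i < L * n" "(t * n + i) mod n = i" "(t * n + i) div n = t" if "t < L" "i < n" for t i
  proof -
    have "t * n + i < Suc t * n" using that by simp
    also have "\<dots> \<le> L * n" using that by (intro mult_le_mono1) simp
    finally show "t * n + i < L * n" .
  qed (use that in auto)
  have "(?A * ?X) $$ (x,j) = (\<Sum>t<L. \<Sum>i<n. ?A $$ (x, t * n + i) * ?X $$ (t * n + i, j))"
    by (simp add: index_mult_mat_sum[OF A X x j] sum_lessThan_mult_blocks)
  also have "\<dots> = (\<Sum>t<L. companion_entry L Dg c (x div n) t * f (x mod n) j (k + t))"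
    using x j n by (intro sum.cong refl)
      (auto simp: companion_block_mat_def stacked_terms_def idx if_distrib[of "\<lambda>v. v * _"] cong: if_cong)
  also have "\<dots> = f (x mod n) j (Suc k + x div n)"
    using rec[of "x mod n" j "k + L"] n j Dg by (intro companion_row_sum[OF t]) (auto simp: add_diff_assoc)
  finally show "(?A * ?X) $$ (x,j) = stacked_terms L n m f (Suc k) $$ (x,j)"
    using x j by (simp add: stacked_terms_def)
qed (auto simp: companion_block_mat_def stacked_terms_def)

lemma realization_of_linear_recurrence:
  fixes f :: "nat \<Rightarrow> nat \<Rightarrow> nat \<Rightarrow> 'a :: comm_semiring_1"
  assumes L: "1 \<le> L" "Dg \<le> L"
    and rec: "\<And>i j k. i < n \<Longrightarrow> j < m \<Longrightarrow> L \<le> k \<Longrightarrow> f i j k = (\<Sum>l=1..Dg. c l * f i j (k - l))"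
  shows "\<exists>N C A B. C \<in> carrier_mat n N \<and> A \<in> carrier_mat N N \<and> B \<in> carrier_mat N m \<and>
     (\<forall>k. mat n m (\<lambda>(i,j). f i j k) = C * A ^\<^sub>m k * B)"
proof -
  define A where "A = companion_block_mat L Dg c n"
  define X where "X = stacked_terms L n m f"
  define C :: "'a mat" where "C = mat n (L * n) (\<lambda>(i,x). if x = i then 1 else 0)"
  have A: "A \<in> carrier_mat (L * n) (L * n)" and X: "X k \<in> carrier_mat (L * n) m"
    and C: "C \<in> carrier_mat n (L * n)" for k
    unfolding A_def X_def C_def companion_block_mat_def stacked_terms_def by auto
  have "A ^\<^sub>m k * X 0 = X k" for k
  proof (induction k)
    case (Suc k)
    have "A ^\<^sub>m Suc k * X 0 = A * (A ^\<^sub>m k * X 0)"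
      by (simp only: pow_mat_Suc_left[OF A] assoc_mult_mat[OF A pow_carrier_mat[OF A] X])
    then show ?case
      using Suc companion_block_mat_mult_stacked_terms[where f=f and c=c and n=n and m=m, OF L(2) rec] by (simp add: A_def X_def)
  qed (use A in \<open>simp add: left_mult_one_mat[OF X]\<close>)
  moreover have "C * X k = mat n m (\<lambda>(i,j). f i j k)" for k
  proof (rule eq_matI)
    fix i j assume "i < dim_row (mat n m (\<lambda>(i,j). f i j k))" "j < dim_col (mat n m (\<lambda>(i,j). f i j k))"
    then have ij: "i < n" "j < m" by auto
    moreover have "i < L * n" using ij L by (metis less_le_trans mult_1 mult_le_mono1)
    ultimately show "(C * X k) $$ (i,j) = mat n m (\<lambda>(i,j). f i j k) $$ (i,j)"
      unfolding index_mult_mat_sum[OF C X ij]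
      by (simp add: C_def X_def stacked_terms_def if_distrib[of "\<lambda>v. v * _"] cong: if_cong)
  qed (use C X[of k] in auto)
  ultimately have "mat n m (\<lambda>(i,j). f i j k) = C * A ^\<^sub>m k * X 0" for k
    by (simp add: assoc_mult_mat[OF C pow_carrier_mat[OF A] X])
  then show ?thesis using A C X by blast
qed

lemma realization_of_rational:
  fixes p d :: "nat \<Rightarrow> nat \<Rightarrow> complex poly"
  assumes "\<forall>i<n. \<forall>j<m. poly (d i j) 0 \<noteq> 0"
  shows "\<exists>N C A B. C \<in> carrier_mat n N \<and> A \<in> carrier_mat N N \<and> B \<in> carrier_mat N m \<and>
           (\<forall>k. rat_coeff n m p d k = C * A ^\<^sub>m k * B)"
proof -
  define f where "f i j k = fps_nth (fps_of_poly (p i j) / fps_of_poly (d i j)) k" for i j k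
  obtain L Dg c where L: "1 \<le> L" "Dg \<le> L"
    and rec: "\<forall>i<n. \<forall>j<m. \<forall>k\<ge>L. f i j k = (\<Sum>l=1..Dg. c l * f i j (k - l))"
    using rational_coeffs_linear_recurrence[OF assms] unfolding f_def by blast
  have "rat_coeff n m p d k = mat n m (\<lambda>(i,j). f i j k)" for k
    by (simp add: rat_coeff_def f_def)
  then show ?thesis
    using realization_of_linear_recurrence[OF L, of n m f c] rec by simp
qed

lemma qexp_realization_iff_rational_q_Borel:
  assumes q: "0 \<le> q" and T: "\<And>z. T z \<in> carrier_mat n m"
  shows "(\<exists>N C A B. C \<in> carrier_mat n N \<and> A \<in> carrier_mat N N \<and> B \<in> carrier_mat N m \<and>
            (\<forall>\<^sub>F z in nhds 0. T z = C * qexp_mat q A z * B))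
    \<longleftrightarrow> (\<exists>p d. (\<forall>i<n. \<forall>j<m. poly (d i j) 0 \<noteq> 0) \<and> q_Borel_of q n m T p d)"
proof
  assume "\<exists>N C A B. C \<in> carrier_mat n N \<and> A \<in> carrier_mat N N \<and> B \<in> carrier_mat N m \<and>
            (\<forall>\<^sub>F z in nhds 0. T z = C * qexp_mat q A z * B)"
  then obtain N C A B where CAB: "C \<in> carrier_mat n N" "A \<in> carrier_mat N N" "B \<in> carrier_mat N m"
    and qexp: "\<forall>\<^sub>F z in nhds 0. T z = C * qexp_mat q A z * B" by blast
  obtain p d where d: "\<forall>i<n. \<forall>j<m. poly (d i j) 0 \<noteq> 0" and coeff: "\<forall>k. rat_coeff n m p d k = C * A ^\<^sub>m k * B"
    using rational_of_realization[OF CAB] by blast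
  have "q_Borel_of q n m T p d"
    using q_Borel_of_iff_qexp_mat[where T=T, OF q CAB T coeff[rule_format]] qexp by blast
  with d show "\<exists>p d. (\<forall>i<n. \<forall>j<m. poly (d i j) 0 \<noteq> 0) \<and> q_Borel_of q n m T p d" by blast
next
  assume "\<exists>p d. (\<forall>i<n. \<forall>j<m. poly (d i j) 0 \<noteq> 0) \<and> q_Borel_of q n m T p d"
  then obtain p d where d: "\<forall>i<n. \<forall>j<m. poly (d i j) 0 \<noteq> 0" and Borel: "q_Borel_of q n m T p d" by blast
  obtain N C A B where CAB: "C \<in> carrier_mat n N" "A \<in> carrier_mat N N" "B \<in> carrier_mat N m"
    and coeff: "\<forall>k. rat_coeff n m p d k = C * A ^\<^sub>m k * B"
    using realization_of_rational[OF d] by blast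
  have "\<forall>\<^sub>F z in nhds 0. T z = C * qexp_mat q A z * B"
    using q_Borel_of_iff_qexp_mat[where T=T, OF q CAB T coeff[rule_format]] Borel by blast
  with CAB show "\<exists>N C A B. C \<in> carrier_mat n N \<and> A \<in> carrier_mat N N \<and> B \<in> carrier_mat N m \<and>
            (\<forall>\<^sub>F z in nhds 0. T z = C * qexp_mat q A z * B)" by blast
qed

theorem theorem5p7:
  fixes q :: real and n m :: nat and T :: "complex \<Rightarrow> complex mat"
  assumes "0 \<le> q" and "q < 1"
    and "analytic_at0_mat n m T"
  shows "q_rational q n m T \<longleftrightarrow>
    (\<exists>p d. (\<forall>i<n. \<forall>j<m. poly (d i j) 0 \<noteq> 0) \<and> q_Borel_of q n m T p d)"
proof -
  have T: "\<And>z. T z \<in> carrier_mat n m" using assms(3) unfolding analytic_at0_mat_def by blast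
  show ?thesis
    unfolding q_rational_iff_qexp_mat[OF assms(1,2)] qexp_realization_iff_rational_q_Borel[OF assms(1) T] ..
qed

end
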